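(* Let $\delta,\ell,n\in\mathbb{Z}^+$ with $\ell\mid n$ and $2\delta<\ell\le n/2$. The redundancy $r_\delta(\ell,n)$ of any block-by-block decodable code $\mathcal{C}\subseteq\mathbb{F}_2^n$ that detects up to $\delta$ deletions per block satisfies $$r_\delta(\ell,n)\ge(2\delta+1)(n/\ell-1).$$
   Context: A binary string $\mathbf{x}\in\mathbb{F}_2^n$ with $\ell\mid n$ is viewed as a concatenation $\mathbf{x}=\langle\mathbf{x}^1,\dots,\mathbf{x}^{n/\ell}\rangle$ of blocks $\mathbf{x}^j=(x_{1+(j-1)\ell},\dots,x_{j\ell})\in\mathbb{F}_2^\ell$. A code $\mathcal{C}\subseteq\mathbb{F}_2^n$ detects up to $\delta$ deletions per block if there is a decoding function $\mathrm{Dec}:\mathbb{F}_2^*\to\mathbb{Z}_{\delta+1}^{n/\ell}$ such that for every $\mathbf{x}\in\mathcal{C}$ and every string $\mathbf{y}$ obtained from $\mathbf{x}$ by deleting at most $\delta$ bits from each block (worst case), $\mathrm{Dec}(\mathbf{y})=(\delta_1,\dots,\delta_{n/\ell})$ where $\delta_j$ is the exact number of bits deleted from block $\mathbf{x}^j$. Such a code is block-by-block decodable if, letting $\alpha_j$ be the starting position of block $j$ in $\mathbf{y}$ (with $\alpha_1=1$), there is a decoder which can output the exact number of deletions in any block $\mathbf{x}^j$ by only processing the bits $y_{\alpha_j},\dots,y_{\alpha_j+\ell-1}$. The redundancy of $\mathcal{C}$ is $n-\log_2|\mathcal{C}|$. *)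

theory Defs
  imports Complex_Main "HOL-Library.Sublist"
begin

text \<open>Binary strings are lists of booleans. Blocks are 0-indexed: block j (j < n div l)
  consists of positions j*l, ..., j*l + l - 1.\<close>

definition block :: "nat \<Rightarrow> bool list \<Rightarrow> nat \<Rightarrow> bool list" where
  "block l x j = take l (drop (j * l) x)"

text \<open>The received string is concat ys, and the number of deletions in block j is l - length (ys!j).\<close>

definition del_pattern :: "nat \<Rightarrow> nat \<Rightarrow> bool list \<Rightarrow> bool list list \<Rightarrow> bool" where
  "del_pattern l d x ys \<longleftrightarrow>
     length ys = length x div l \<and>
     (\<forall>j < length ys. subseq (ys ! j) (block l x j) \<and> l - length (ys ! j) \<le> d)"

definition del_counts :: "nat \<Rightarrow> bool list list \<Rightarrow> nat list" where
  "del_counts l ys = map (\<lambda>z. l - length z) ys"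

definition detects_deletions_per_block :: "nat \<Rightarrow> nat \<Rightarrow> bool list set \<Rightarrow> bool" where
  "detects_deletions_per_block l d C \<longleftrightarrow>
     (\<exists>Dec :: bool list \<Rightarrow> nat list. \<forall>x\<in>C. \<forall>ys. del_pattern l d x ys \<longrightarrow>
        Dec (concat ys) = del_counts l ys)"

definition block_start :: "bool list list \<Rightarrow> nat \<Rightarrow> nat" where
  "block_start ys j = sum_list (map length (take j ys))"

definition block_by_block_decodable :: "nat \<Rightarrow> nat \<Rightarrow> bool list set \<Rightarrow> bool" where
  "block_by_block_decodable l d C \<longleftrightarrow>
     (\<exists>D :: nat \<Rightarrow> bool list \<Rightarrow> nat. \<forall>x\<in>C. \<forall>ys. del_pattern l d x ys \<longrightarrow>
        (\<forall>j < length ys. D j (take l (drop (block_start ys j) (concat ys))) = l - length (ys ! j)))"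

definition redundancy :: "nat \<Rightarrow> bool list set \<Rightarrow> real" where
  "redundancy n C = real n - log 2 (real (card C))"

end

theory Submission
  imports Defs "HOL-Library.FuncSet"
begin

text \<open>Fix a codeword and the boundary between two consecutive blocks a and b. Deleting the
  last k \<le> d bits of a and the first i \<le> d bits of b shows the decoder of a the window
  formed by the first l - k bits of a followed by bits i, ..., i + k - 1 of b, on which it must
  answer k. Comparing k = 0 with k = 1 forces b_0, ..., b_d to be the complement of the last
  bit c of a; comparing k with k + 1 forces the last d bits of a to equal c; comparing k = 0
  with k = d shows that c is a function of the first l - d bits of a. So the 2d + 1 bits
  around each of the n/l - 1 boundaries are determined by the bits before them, and the code
  embeds into the set of words on the remaining n - (2d + 1)(n/l - 1) positions.\<close>

text \<open>\<open>E\<close> is the decoder of block \<open>a\<close>, which is followed by block \<open>b\<close>; the argument of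
  \<open>E\<close> is the length-\<open>l\<close> window it reads after the last \<open>k\<close> bits of \<open>a\<close> and the first
  \<open>i\<close> bits of \<open>b\<close> have been deleted.\<close>

definition detects_boundary_deletions ::
    "nat \<Rightarrow> nat \<Rightarrow> (bool list \<Rightarrow> nat) \<Rightarrow> bool list \<Rightarrow> bool list \<Rightarrow> bool" where
  "detects_boundary_deletions l d E a b \<longleftrightarrow>
     (\<forall>k\<le>d. \<forall>i\<le>d. E (take (l - k) a @ take k (drop i b)) = k)"

context
  fixes l d :: nat and E :: "bool list \<Rightarrow> nat" and a b :: "bool list"
  assumes detects: "detects_boundary_deletions l d E a b"
    and len_a: "length a = l" and len_b: "length b = l"
    and d_pos: "0 < d" and d_less: "2 * d < l"
begin

lemma decoder_window:
  assumes "k \<le> d" "i \<le> d"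
  shows "E (take (l - k) a @ take k (drop i b)) = k"
  using detects assms unfolding detects_boundary_deletions_def by blast

lemma decoder_tail_window:
  assumes "k \<le> d"
  shows "E (take (l - k) a @ take k b) = k"
  using decoder_window[of k 0] assms by simp

lemma decoder_whole_block: "E a = 0"
  using decoder_tail_window[of 0] len_a by simp

lemma next_block_starts_with_complement:
  assumes "t \<le> d"
  shows "b ! t = (\<not> last a)"
proof (rule ccontr)
  assume "b ! t \<noteq> (\<not> last a)"
  then have "take 1 (drop t b) = [last a]"
    using assms d_less len_b by (simp add: take_Suc_conv_app_nth Cons_nth_drop_Suc[symmetric])
  moreover have "take (l - 1) a @ [last a] = a"
  proof -
    have "a \<noteq> []" using len_a d_less by auto
    then show ?thesis using len_a by (metis append_butlast_last_id butlast_conv_take)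
  qed
  ultimately have "E a = 1"
    using decoder_window[of 1 t] d_pos assms by simp
  then show False using decoder_whole_block by simp
qed

lemma take_next_block_eq_replicate:
  assumes "k \<le> d"
  shows "take k b = replicate k (\<not> last a)"
  using assms d_less len_b next_block_starts_with_complement
  by (intro nth_equalityI) auto

lemma block_ends_with_constant_run:
  assumes "l - d \<le> p" "p < l"
  shows "a ! p = last a"
proof (rule ccontr)
  define k where "k = l - Suc p"
  have k: "k < d" "l - k = Suc p" "l - Suc k = p" using assms unfolding k_def by auto
  assume "a ! p \<noteq> last a"
  then have "take (l - k) a = take p a @ [\<not> last a]"
    using k assms len_a by (simp add: take_Suc_conv_app_nth)
  moreover have "take (Suc k) b = take k b @ [\<not> last a]"
    using k by (simp only: take_next_block_eq_replicate less_imp_le Suc_leI replicate_Suc replicate_append_same)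
  ultimately have "take (l - k) a @ take k b = take (l - Suc k) a @ take (Suc k) b"
    using k by (simp add: take_next_block_eq_replicate less_imp_le replicate_append_same)
  then show False
    using decoder_tail_window[of k] decoder_tail_window[of "Suc k"] k by simp
qed

lemma last_eq_decoder_test:
  "last a = (E (take (l - d) a @ replicate d True) = 0)"
proof -
  have "a = take (l - d) a @ replicate d (last a)"
    using len_a d_less block_ends_with_constant_run
    by (intro nth_equalityI) (auto simp: nth_append)
  then have "E (take (l - d) a @ replicate d (last a)) = 0"
    using decoder_whole_block by simp
  moreover have "E (take (l - d) a @ replicate d (\<not> last a)) = d"
    using decoder_tail_window[of d] take_next_block_eq_replicate[of d] by simp
  ultimately show ?thesis using d_pos by (cases "last a") auto
qed

end

lemma length_block:
  assumes "length x = m * l" "j < m"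
  shows "length (block l x j) = l"
proof -
  have "Suc j * l \<le> m * l" using assms(2) by (intro mult_le_mono1) simp
  then show ?thesis using assms(1) by (simp add: block_def)
qed

lemma nth_block:
  assumes "length x = m * l" "j < m" "t < l"
  shows "block l x j ! t = x ! (j * l + t)"
  using assms by (simp add: block_def)

lemma drop_block_start_concat:
  assumes "j \<le> length ys"
  shows "drop (block_start ys j) (concat ys) = concat (drop j ys)"
proof -
  have "concat ys = concat (take j ys) @ concat (drop j ys)"
    by (metis append_take_drop_id concat_append)
  moreover have "length (concat (take j ys)) = block_start ys j"
    by (simp add: block_start_def length_concat)
  ultimately show ?thesis by (metis append_eq_conv_conj)
qed

definition boundary_deletion_pattern ::
    "nat \<Rightarrow> bool list \<Rightarrow> nat \<Rightarrow> nat \<Rightarrow> nat \<Rightarrow> bool list list" where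
  "boundary_deletion_pattern l x j k i =
     (map (block l x) [0..<length x div l])
       [j := take (l - k) (block l x j), Suc j := drop i (block l x (Suc j))]"

context
  fixes l m d j k i :: nat and x :: "bool list"
  assumes len_x: "length x = m * l" and l_pos: "0 < l" and j_less: "Suc j < m"
    and k_le: "k \<le> d" and i_le: "i \<le> d" and d_less: "2 * d < l"
begin

private abbreviation "ys \<equiv> boundary_deletion_pattern l x j k i"

lemma length_boundary_deletion_pattern: "length ys = m"
  using len_x l_pos by (simp add: boundary_deletion_pattern_def)

lemma del_pattern_boundary_deletion_pattern: "del_pattern l d x ys"
  using len_x l_pos j_less k_le i_le length_block[OF len_x]
  by (auto simp: del_pattern_def boundary_deletion_pattern_def nth_list_update
      take_is_prefix suffix_drop)

lemma nth_boundary_deletion_pattern: "ys ! j = take (l - k) (block l x j)"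
  using len_x l_pos j_less by (simp add: boundary_deletion_pattern_def)

lemma boundary_deletion_pattern_window:
  "take l (drop (block_start ys j) (concat ys))
     = take (l - k) (block l x j) @ take k (drop i (block l x (Suc j)))"
proof -
  have "concat (drop j ys) = ys ! j @ ys ! Suc j @ concat (drop (Suc (Suc j)) ys)"
    using length_boundary_deletion_pattern j_less
    by (simp add: Cons_nth_drop_Suc[symmetric])
  moreover have "ys ! Suc j = drop i (block l x (Suc j))"
    using len_x l_pos j_less by (simp add: boundary_deletion_pattern_def)
  ultimately show ?thesis
    using drop_block_start_concat[of j ys] length_boundary_deletion_pattern
      nth_boundary_deletion_pattern length_block[OF len_x] j_less k_le i_le d_less
    by simp
qed

end

lemma block_decoder_detects_boundary_deletions:
  assumes decodes: "\<forall>ys. del_pattern l d x ys \<longrightarrow>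
      (\<forall>j < length ys. D j (take l (drop (block_start ys j) (concat ys))) = l - length (ys ! j))"
    and len_x: "length x = m * l" and j_less: "Suc j < m" and d_less: "2 * d < l"
  shows "detects_boundary_deletions l d (D j) (block l x j) (block l x (Suc j))"
  unfolding detects_boundary_deletions_def
proof (intro allI impI)
  fix k i assume k_le: "k \<le> d" and i_le: "i \<le> d"
  have l_pos: "0 < l" using d_less by simp
  note pattern = len_x l_pos j_less k_le i_le d_less
  let ?ys = "boundary_deletion_pattern l x j k i"
  have "D j (take l (drop (block_start ?ys j) (concat ?ys))) = l - length (?ys ! j)"
    using decodes del_pattern_boundary_deletion_pattern[OF pattern]
      length_boundary_deletion_pattern[OF pattern] j_less by simp
  then show "D j (take (l - k) (block l x j) @ take k (drop i (block l x (Suc j)))) = k"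
    using boundary_deletion_pattern_window[OF pattern] nth_boundary_deletion_pattern[OF pattern]
      length_block[OF len_x, of j] j_less k_le d_less by simp
qed

context
  fixes l m d j :: nat and x :: "bool list" and E :: "bool list \<Rightarrow> nat"
  assumes detects: "detects_boundary_deletions l d E (block l x j) (block l x (Suc j))"
    and len_x: "length x = m * l" and j_less: "Suc j < m"
    and d_pos: "0 < d" and d_less: "2 * d < l"
begin

private lemma last_block_eq_nth:
  "last (block l x j) = x ! (Suc j * l - 1)"
proof -
  have "block l x j \<noteq> []" "length (block l x j) = l"
    using length_block[OF len_x, of j] j_less d_less by auto
  then show ?thesis
    using nth_block[OF len_x, of j "l - 1"] j_less d_less by (simp add: last_conv_nth add.commute)
qed

lemma nth_before_boundary:
  assumes "Suc j * l - d \<le> p" "p < Suc j * l"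
  shows "x ! p = (E (drop (j * l) (take (Suc j * l - d) x) @ replicate d True) = 0)"
proof -
  note blocks = detects length_block[OF len_x, of j] length_block[OF len_x, of "Suc j"]
  have "x ! p = block l x j ! (p - j * l)"
    using nth_block[OF len_x, of j "p - j * l"] assms j_less d_less by simp
  also have "\<dots> = last (block l x j)"
    using block_ends_with_constant_run[OF blocks] assms j_less d_pos d_less by simp
  also have "\<dots> = (E (take (l - d) (block l x j) @ replicate d True) = 0)"
    using last_eq_decoder_test[OF blocks] j_less d_pos d_less by simp
  also have "take (l - d) (block l x j) = drop (j * l) (take (Suc j * l - d) x)"
    using d_less by (simp add: block_def drop_take)
  finally show ?thesis .
qed

lemma nth_after_boundary:
  assumes "Suc j * l \<le> p" "p \<le> Suc j * l + d"
  shows "x ! p = (\<not> x ! (Suc j * l - 1))"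
proof -
  note blocks = detects length_block[OF len_x, of j] length_block[OF len_x, of "Suc j"]
  have "x ! p = block l x (Suc j) ! (p - Suc j * l)"
    using nth_block[OF len_x j_less, of "p - Suc j * l"] assms d_less by simp
  also have "\<dots> = (\<not> last (block l x j))"
    using next_block_starts_with_complement[OF blocks] assms j_less d_pos d_less by simp
  finally show ?thesis using last_block_eq_nth by simp
qed

end

lemma list_eq_if_nth_determined_by_prefix:
  assumes "length xs = length ys"
    and "\<And>p. p < length xs \<Longrightarrow> take p xs = take p ys \<Longrightarrow> xs ! p = ys ! p"
  shows "xs = ys"
proof -
  have "take p xs = take p ys" if "p \<le> length xs" for p
    using that
  proof (induction p)
    case (Suc p)
    then show ?case using assms by (simp add: take_Suc_conv_app_nth)
  qed simp
  from this[of "length xs"] show ?thesis using assms(1) by simp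
qed

definition boundary_zones :: "nat \<Rightarrow> nat \<Rightarrow> nat \<Rightarrow> nat set" where
  "boundary_zones l d k = (\<Union>j<k. {Suc j * l - d .. Suc j * l + d})"

lemma codeword_eq_if_eq_off_boundary_zones:
  assumes "block_by_block_decodable l d C" and len: "\<forall>x\<in>C. length x = m * l"
    and d_pos: "0 < d" and d_less: "2 * d < l"
    and x: "x \<in> C" and x': "x' \<in> C"
    and eq_off: "\<forall>p \<in> {..<m * l} - boundary_zones l d (m - 1). x ! p = x' ! p"
  shows "x = x'"
proof (rule list_eq_if_nth_determined_by_prefix)
  obtain D :: "nat \<Rightarrow> bool list \<Rightarrow> nat" where D: "\<forall>x\<in>C. \<forall>ys. del_pattern l d x ys \<longrightarrow>
      (\<forall>j < length ys. D j (take l (drop (block_start ys j) (concat ys))) = l - length (ys ! j))"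
    using assms(1) unfolding block_by_block_decodable_def by blast
  fix p assume p: "p < length x" and prefix: "take p x = take p x'"
  show "x ! p = x' ! p"
  proof (cases "p \<in> boundary_zones l d (m - 1)")
    case False
    then show ?thesis using eq_off p len x by auto
  next
    case True
    then obtain j where j: "Suc j < m" "Suc j * l - d \<le> p" "p \<le> Suc j * l + d"
      unfolding boundary_zones_def by (auto simp: less_diff_conv)
    have detects: "detects_boundary_deletions l d (D j) (block l y j) (block l y (Suc j))"
      if "y \<in> C" for y
      using block_decoder_detects_boundary_deletions D that len j(1) d_less by blast
    consider (before) "p < Suc j * l" | (after) "Suc j * l \<le> p" by linarith
    then show ?thesis
    proof cases
      case before
      then have "take (Suc j * l - d) x = take (Suc j * l - d) x'"
        using prefix j(2) by (metis min_absorb1 take_take)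
      then show ?thesis
        using nth_before_boundary[OF detects] x x' len j before d_pos d_less by simp
    next
      case after
      moreover have "0 < Suc j * l" using d_less by simp
      ultimately have "Suc j * l - 1 < p" by linarith
      then have "x ! (Suc j * l - 1) = x' ! (Suc j * l - 1)"
        using prefix by (metis nth_take)
      then show ?thesis
        using nth_after_boundary[OF detects] x x' len j after d_pos d_less by simp
    qed
  qed
qed (use len x x' in simp)

lemma card_le_card_power_if_determined_on:
  fixes C :: "'a::finite list set"
  assumes "finite F" and "\<And>x y. x \<in> C \<Longrightarrow> y \<in> C \<Longrightarrow> \<forall>p\<in>F. x ! p = y ! p \<Longrightarrow> x = y"
  shows "card C \<le> card (UNIV :: 'a set) ^ card F"
proof -
  let ?restrict = "\<lambda>x. restrict (\<lambda>p. x ! p) F"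
  have "inj_on ?restrict C"
  proof (rule inj_onI)
    fix x y assume "x \<in> C" "y \<in> C" "?restrict x = ?restrict y"
    then show "x = y" using assms(2) by (metis restrict_apply')
  qed
  moreover have "?restrict ` C \<subseteq> PiE F (\<lambda>_. UNIV)" by auto
  ultimately have "card C \<le> card (PiE F (\<lambda>_. UNIV :: 'a set))"
    using assms(1) by (intro card_inj_on_le) (auto simp: finite_PiE)
  also have "\<dots> = card (UNIV :: 'a set) ^ card F" using assms(1) by (simp add: card_PiE)
  finally show ?thesis .
qed

lemma card_boundary_zones:
  assumes "2 * d < l"
  shows "card (boundary_zones l d k) = k * (2 * d + 1)"
proof -
  have disjoint: "{Suc i * l - d .. Suc i * l + d} \<inter> {Suc j * l - d .. Suc j * l + d} = {}"
    if "i < j" for i j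
  proof -
    have "Suc (Suc i) * l \<le> Suc j * l" using that by (intro mult_le_mono1) simp
    then show ?thesis using assms by auto
  qed
  have "card (boundary_zones l d k) = (\<Sum>j<k. card {Suc j * l - d .. Suc j * l + d})"
    unfolding boundary_zones_def
  proof (rule card_UN_disjoint)
    show "\<forall>i\<in>{..<k}. \<forall>j\<in>{..<k}. i \<noteq> j \<longrightarrow>
        {Suc i * l - d .. Suc i * l + d} \<inter> {Suc j * l - d .. Suc j * l + d} = {}"
      using disjoint by (metis Int_commute nat_neq_iff)
  qed auto
  also have "\<dots> = (\<Sum>j<k. 2 * d + 1)"
  proof (rule sum.cong)
    fix j have "d \<le> Suc j * l" using assms by (simp add: trans_le_add1)
    then show "card {Suc j * l - d .. Suc j * l + d} = 2 * d + 1" by simp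
  qed simp
  finally show ?thesis by simp
qed

lemma boundary_zones_subset:
  assumes "2 * d < l"
  shows "boundary_zones l d k \<subseteq> {..<Suc k * l}"
proof
  fix p assume "p \<in> boundary_zones l d k"
  then obtain j where "j < k" "p \<le> Suc j * l + d" unfolding boundary_zones_def by auto
  moreover have "Suc (Suc j) * l \<le> Suc k * l" using \<open>j < k\<close> by (intro mult_le_mono1) simp
  ultimately show "p \<in> {..<Suc k * l}" using assms by simp
qed

lemma redundancy_ge_if_card_le:
  assumes "card C \<le> 2 ^ k"
  shows "real n - real k \<le> redundancy n C"
proof (cases "card C = 0")
  case False
  have "real (card C) \<le> 2 ^ k"
    using assms by (metis of_nat_le_iff of_nat_numeral of_nat_power)
  then have "log 2 (real (card C)) \<le> log 2 (2 ^ k)"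
    using False by (subst log_le_cancel_iff) auto
  then show ?thesis by (simp add: redundancy_def log_nat_power)
qed (simp add: redundancy_def log_def)

theorem theorem3:
  fixes d l n :: nat and C :: "bool list set"
  assumes "d > 0" "l > 0" "n > 0"
    and "l dvd n" and "2 * d < l" and "2 * l \<le> n"
    and "\<forall>x\<in>C. length x = n"
    and "detects_deletions_per_block l d C"
    and "block_by_block_decodable l d C"
  shows "redundancy n C \<ge> real (2 * d + 1) * (real n / real l - 1)"
proof -
  obtain m where "n = m * l" using \<open>l dvd n\<close> by (metis dvdE mult.commute)
  then obtain k where n: "n = Suc k * l" using \<open>n > 0\<close> by (cases m) auto
  define Z where "Z = boundary_zones l d k"
  define F where "F = {..<n} - Z"
  have Z_sub: "Z \<subseteq> {..<n}" and card_Z: "card Z = k * (2 * d + 1)"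
    using boundary_zones_subset[OF \<open>2 * d < l\<close>] card_boundary_zones[OF \<open>2 * d < l\<close>] n
    unfolding Z_def by simp_all
  have "card C \<le> 2 ^ card F"
    using card_le_card_power_if_determined_on[of F C]
      codeword_eq_if_eq_off_boundary_zones[OF \<open>block_by_block_decodable l d C\<close>, of "Suc k"]
      assms n unfolding F_def Z_def by simp
  have "real n / real l - 1 = real k"
    using n \<open>l > 0\<close> by (simp add: field_simps)
  then have "real (2 * d + 1) * (real n / real l - 1) = real (card Z)"
    using card_Z by (simp add: algebra_simps)
  also have "\<dots> = real n - real (card F)"
    using Z_sub card_mono[OF _ Z_sub] finite_subset[OF Z_sub]
    unfolding F_def by (simp add: card_Diff_subset of_nat_diff)
  also have "\<dots> \<le> redundancy n C"
    using redundancy_ge_if_card_le[OF \<open>card C \<le> 2 ^ card F\<close>] .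
  finally show ?thesis .
qed

end
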